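(* Let $(T,X)$ be a semiflow, where $T$ is a topological monoid such that $\bigcap_{s\in F}Ts\ne\emptyset$ for every finite $F\subseteq T$, and $X$ is a Hausdorff uniform space. Let $x\in X$ be such that $\overline{Tx}$ is compact and $\omega[x]\subseteq\mathtt{Equi}(T,X)$. Then $\omega[x]$ is a minimal subset of $X$, $\omega[x]\subseteq\mathtt{RE}(T,X)$, and $x\in\mathtt{AAP}(T,X)$. If in addition $T$ is an amenable semigroup, then $(T,\omega[x])$ is an a.p. subdynamic.
   Context: $\mathscr U_X$ is a compatible symmetric uniformity; $\varepsilon[A]=\{y:\exists a\in A,(a,y)\in\varepsilon\}$. $\omega[x]=\{w\in X:$ for every neighborhood $U$ of $w$ and every $s\in T$ there is $t\in T$ with $tsx\in U\}$. $\mathtt{Equi}(T,X)$ is the set of $x$ such that for every $\varepsilon\in\mathscr U_X$ there is a neighborhood $U$ of $x$ with $(tx,ty)\in\varepsilon$ for all $t\in T$, $y\in U$. $\mathtt{RE}(T,X)$ (Birkhoff recurrent points) is the set of $x$ such that for every $\varepsilon\in\mathscr U_X$ there is a compact $K\subseteq T$ with $Tx\subseteq\varepsilon[Ktx]$ for all $t\in T$. $A\subseteq T$ is syndetic if there is compact $K$ with $Kt\cap A\ne\emptyset$ for all $t$; $y$ is a.p. if its return-time sets to neighborhoods are syndetic. $\mathtt{AAP}(T,X)$ is the set of $x$ for which there is an a.p. point $y$ such that for every $\varepsilon\in\mathscr U_X$ there is $s\in T$ with $(tsx,tsy)\in\varepsilon$ for all $t\in T$. A minimal subset is a nonempty closed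 invariant set with no proper nonempty closed invariant subset. $(T,Z)$ is an a.p. dynamic if for every $\alpha$ there is a syndetic $A$ with $Az\subseteq\alpha[z]$ for all $z\in Z$. *)

theory Defs
  imports "HOL-Analysis.Analysis"
begin

definition semiflow :: "('t::topological_monoid_mult \<Rightarrow> 'x::topological_space \<Rightarrow> 'x) \<Rightarrow> bool" where
  "semiflow act \<longleftrightarrow> continuous_on UNIV (\<lambda>p. act (fst p) (snd p))
     \<and> (\<forall>x. act 1 x = x) \<and> (\<forall>s t x. act (s * t) x = act s (act t x))"

definition UX :: "('x::uniform_space \<times> 'x) set set" where
  "UX = {E. eventually (\<lambda>p. p \<in> E) uniformity \<and> sym E}"

definition ent_image :: "('x \<times> 'x) set \<Rightarrow> 'x set \<Rightarrow> 'x set" where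
  "ent_image E A = {y. \<exists>a\<in>A. (a, y) \<in> E}"

definition orbit :: "('t \<Rightarrow> 'x \<Rightarrow> 'x) \<Rightarrow> 'x \<Rightarrow> 'x set" where
  "orbit act x = range (\<lambda>t. act t x)"

definition omega_set :: "('t \<Rightarrow> 'x::topological_space \<Rightarrow> 'x) \<Rightarrow> 'x \<Rightarrow> 'x set" where
  "omega_set act x = {w. \<forall>U. open U \<and> w \<in> U \<longrightarrow> (\<forall>s. \<exists>t. act t (act s x) \<in> U)}"

definition Equi :: "('t \<Rightarrow> 'x::uniform_space \<Rightarrow> 'x) \<Rightarrow> 'x set" where
  "Equi act = {x. \<forall>\<epsilon>\<in>UX. \<exists>U. open U \<and> x \<in> U \<and> (\<forall>t. \<forall>y\<in>U. (act t x, act t y) \<in> \<epsilon>)}"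

definition RE :: "('t::topological_space \<Rightarrow> 'x::uniform_space \<Rightarrow> 'x) \<Rightarrow> 'x set" where
  "RE act = {x. \<forall>\<epsilon>\<in>UX. \<exists>K. compact K \<and>
     (\<forall>t. orbit act x \<subseteq> ent_image \<epsilon> ((\<lambda>k. act k (act t x)) ` K))}"

definition syndetic :: "'t::{topological_space, times} set \<Rightarrow> bool" where
  "syndetic A \<longleftrightarrow> (\<exists>K. compact K \<and> (\<forall>t. (\<lambda>k. k * t) ` K \<inter> A \<noteq> {}))"

definition ap_point :: "('t::{topological_space, times} \<Rightarrow> 'x::topological_space \<Rightarrow> 'x) \<Rightarrow> 'x \<Rightarrow> bool" where
  "ap_point act y \<longleftrightarrow> (\<forall>U. open U \<and> y \<in> U \<longrightarrow> syndetic {t. act t y \<in> U})"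

definition AAP :: "('t::{topological_space, times} \<Rightarrow> 'x::uniform_space \<Rightarrow> 'x) \<Rightarrow> 'x set" where
  "AAP act = {x. \<exists>y. ap_point act y \<and>
     (\<forall>\<epsilon>\<in>UX. \<exists>s. \<forall>t. (act t (act s x), act t (act s y)) \<in> \<epsilon>)}"

definition invariant :: "('t \<Rightarrow> 'x \<Rightarrow> 'x) \<Rightarrow> 'x set \<Rightarrow> bool" where
  "invariant act M \<longleftrightarrow> (\<forall>t. act t ` M \<subseteq> M)"

definition minimal_set :: "('t \<Rightarrow> 'x::topological_space \<Rightarrow> 'x) \<Rightarrow> 'x set \<Rightarrow> bool" where
  "minimal_set act M \<longleftrightarrow> M \<noteq> {} \<and> closed M \<and> invariant act M \<and>
     (\<forall>N. N \<subseteq> M \<and> N \<noteq> {} \<and> closed N \<and> invariant act N \<longrightarrow> N = M)"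

definition ap_dynamic :: "('t::{topological_space, times} \<Rightarrow> 'x::uniform_space \<Rightarrow> 'x) \<Rightarrow> 'x set \<Rightarrow> bool" where
  "ap_dynamic act Z \<longleftrightarrow> (\<forall>\<alpha>\<in>UX. \<exists>A. syndetic A \<and> (\<forall>z\<in>Z. \<forall>a\<in>A. act a z \<in> ent_image \<alpha> {z}))"

definition Cb :: "('t::topological_space \<Rightarrow> real) set" where
  "Cb = {f. continuous_on UNIV f \<and> bounded (range f)}"

definition amenable :: "'t::{topological_space, times} itself \<Rightarrow> bool" where
  "amenable _ \<longleftrightarrow> (\<exists>m :: ('t \<Rightarrow> real) \<Rightarrow> real.
      (\<forall>f\<in>Cb. \<forall>g\<in>Cb. \<forall>a b. m (\<lambda>s. a * f s + b * g s) = a * m f + b * m g)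
    \<and> (\<forall>f\<in>Cb. (\<forall>s. f s \<ge> 0) \<longrightarrow> m f \<ge> 0)
    \<and> m (\<lambda>_. 1) = 1
    \<and> (\<forall>f\<in>Cb. \<forall>t. m (\<lambda>s. f (t * s)) = m f))"

end

(*
  Equicontinuity at the points of \<omega>[x] makes \<omega>[x] minimal: if a closed invariant N \<subseteq> \<omega>[x] contains n,
  the orbit of x comes close to n, and equicontinuity at n carries this approach along, so the orbit
  of n \<subseteq> N comes close to every point of \<omega>[x]. In the compact minimal set \<omega>[x] every orbit visits each
  open set after one of finitely many times, which gives almost periodicity and Birkhoff recurrence.

  For x \<in> AAP, the Ellis--Numakura lemma yields an idempotent u in the compact semigroup of those maps
  of the enveloping semigroup that factor through every act s; then y = u x lies in \<omega>[x] and is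
  proximal to x, and equicontinuity at y turns proximality into uniform closeness of shifted orbits.

  If T is amenable, an invariant mean forces every act r to map \<omega>[x] onto itself (a Urysohn function
  vanishing on act r ` \<omega>[x] would have mean zero, although finitely many of its translates sum to at
  least 1/2). The maps act t on \<omega>[x] form a totally bounded family, so among the powers of any f two
  act almost alike; surjectivity then gives k with k * f almost the identity, and a finite net of
  such k * f provides the syndetic sets of the a.p. property.
*)

theory Submission
  imports Defs
begin

section \<open>Symmetric entourages\<close>

lemma UX_eventually: "E \<in> UX \<Longrightarrow> eventually (\<lambda>p. p \<in> E) uniformity"
  by (simp add: UX_def)

lemma UX_sym: "E \<in> UX \<Longrightarrow> (a, b) \<in> E \<Longrightarrow> (b, a) \<in> E"
  by (simp add: UX_def sym_def)

lemma UX_refl: "E \<in> UX \<Longrightarrow> (a, a) \<in> E"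
  using UX_eventually uniformity_refl by fastforce

lemma UX_Int: "E \<in> UX \<Longrightarrow> F \<in> UX \<Longrightarrow> E \<inter> F \<in> UX"
  by (auto simp: UX_def sym_def intro: eventually_conj)

lemma UX_INT: "finite A \<Longrightarrow> (\<And>a. a \<in> A \<Longrightarrow> G a \<in> UX) \<Longrightarrow> (\<Inter>a\<in>A. G a) \<in> UX"
proof (induction A rule: finite_induct)
  case empty
  show ?case by (simp add: UX_def sym_def)
next
  case (insert a A)
  then show ?case by (simp add: UX_Int)
qed

lemma UX_symmetrize:
  assumes "eventually (\<lambda>p. p \<in> D) uniformity"
  shows "{(a, b). (a, b) \<in> D \<and> (b, a) \<in> D} \<in> UX"
proof -
  have "eventually (\<lambda>(a, b). (b, a) \<in> D) uniformity"
    using uniformity_sym[of "\<lambda>p. p \<in> D"] assms by (simp add: case_prod_unfold)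
  with assms have "eventually (\<lambda>p. p \<in> D \<and> (snd p, fst p) \<in> D) uniformity"
    by eventually_elim (auto simp: case_prod_unfold)
  then show ?thesis
    by (simp add: UX_def sym_def case_prod_unfold)
qed

lemma UX_transE:
  assumes "E \<in> UX"
  obtains D where "D \<in> UX" "\<And>a b c. (a, b) \<in> D \<Longrightarrow> (b, c) \<in> D \<Longrightarrow> (a, c) \<in> E"
proof -
  obtain D where D: "eventually D uniformity" "\<And>a b c. D (a, b) \<Longrightarrow> D (b, c) \<Longrightarrow> (a, c) \<in> E"
    using uniformity_transE[OF UX_eventually[OF assms]] by metis
  have "{(a, b). (a, b) \<in> Collect D \<and> (b, a) \<in> Collect D} \<in> UX"
    by (rule UX_symmetrize) (simp add: D(1))
  with D(2) show ?thesis
    using that by blast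
qed

lemma UX_trans3E:
  assumes "E \<in> UX"
  obtains D where "D \<in> UX"
    "\<And>a b c d. (a, b) \<in> D \<Longrightarrow> (b, c) \<in> D \<Longrightarrow> (c, d) \<in> D \<Longrightarrow> (a, d) \<in> E"
proof -
  obtain D1 where D1: "D1 \<in> UX" "\<And>a b c. (a, b) \<in> D1 \<Longrightarrow> (b, c) \<in> D1 \<Longrightarrow> (a, c) \<in> E"
    using UX_transE[OF assms] by metis
  obtain D2 where D2: "D2 \<in> UX" "\<And>a b c. (a, b) \<in> D2 \<Longrightarrow> (b, c) \<in> D2 \<Longrightarrow> (a, c) \<in> D1"
    using UX_transE[OF D1(1)] by metis
  have "(a, d) \<in> E" if "(a, b) \<in> D2" "(b, c) \<in> D2" "(c, d) \<in> D2" for a b c d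
    using D1(2)[OF D2(2)[OF that(1,2)] D2(2)[OF that(3) UX_refl[OF D2(1)]]] .
  with D2(1) show ?thesis
    using that by blast
qed

lemma UX_nhdsE:
  assumes "E \<in> UX"
  obtains U where "open U" "w \<in> U" "\<And>y. y \<in> U \<Longrightarrow> (w, y) \<in> E"
proof -
  have "eventually (\<lambda>(x', y). x' = w \<longrightarrow> (w, y) \<in> E) uniformity"
    using UX_eventually[OF assms] by eventually_elim auto
  then have "eventually (\<lambda>y. (w, y) \<in> E) (nhds w)"
    by (simp add: eventually_nhds_uniformity)
  then show ?thesis
    using that unfolding eventually_nhds by blast
qed

lemma open_UXE:
  assumes "open U" "w \<in> U"
  obtains E where "E \<in> UX" "\<And>y. (w, y) \<in> E \<Longrightarrow> y \<in> U"
proof -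
  let ?D = "{(a, b). a = w \<longrightarrow> b \<in> U}"
  have "eventually (\<lambda>(x', y). x' = w \<longrightarrow> y \<in> U) uniformity"
    using assms open_uniformity by blast
  then have "eventually (\<lambda>p. p \<in> ?D) uniformity"
    by (simp add: case_prod_unfold)
  then have "{(a, b). (a, b) \<in> ?D \<and> (b, a) \<in> ?D} \<in> UX"
    by (rule UX_symmetrize)
  then show ?thesis
    using that by blast
qed

lemma closed_UX_approx_mem:
  assumes "closed N" "\<And>E. E \<in> UX \<Longrightarrow> \<exists>y\<in>N. (w, y) \<in> E"
  shows "w \<in> N"
proof (rule ccontr)
  assume "w \<notin> N"
  then obtain E where "E \<in> UX" "\<And>y. (w, y) \<in> E \<Longrightarrow> y \<in> - N"
    using open_UXE[of "- N" w] assms(1) by auto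
  then show False
    using assms(2) by fastforce
qed

lemma compact_UX_netE:
  assumes "compact S" "E \<in> UX"
  obtains Z where "Z \<subseteq> S" "finite Z" "\<And>z. z \<in> S \<Longrightarrow> \<exists>z0\<in>Z. (z0, z) \<in> E"
proof -
  have "\<forall>z. \<exists>V. open V \<and> z \<in> V \<and> (\<forall>v\<in>V. (z, v) \<in> E)"
    using UX_nhdsE[OF assms(2)] by metis
  then obtain V where V: "\<And>z. open (V z)" "\<And>z. z \<in> V z" "\<And>z v. v \<in> V z \<Longrightarrow> (z, v) \<in> E"
    by metis
  obtain Z where Z: "Z \<subseteq> S" "finite Z" "S \<subseteq> (\<Union>z\<in>Z. V z)"
    using compactE_image[OF assms(1), of S V] V(1,2) by blast
  have "\<exists>z0\<in>Z. (z0, z) \<in> E" if "z \<in> S" for z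
    using Z(3) that V(3) by blast
  with Z(1,2) show ?thesis
    using that by blast
qed

lemma Hausdorff_space_euclidean_t2: "Hausdorff_space (euclidean :: 'a::t2_space topology)"
  unfolding Hausdorff_space_def disjnt_def by (metis hausdorff open_openin)

lemma compact_imp_closed_fun:
  fixes S :: "('a \<Rightarrow> 'b::t2_space) set"
  assumes "compact S"
  shows "closed S"
proof -
  have "Hausdorff_space (product_topology (\<lambda>_. euclidean :: 'b topology) (UNIV :: 'a set))"
    by (simp add: Hausdorff_space_product_topology Hausdorff_space_euclidean_t2)
  then have "Hausdorff_space (euclidean :: ('a \<Rightarrow> 'b) topology)"
    by (simp add: euclidean_product_topology)
  with assms show ?thesis
    by (metis closed_closedin compactin_euclidean_iff compactin_imp_closedin)
qed

lemma open_fun_component: "open U \<Longrightarrow> open {f. f i \<in> U}"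
  using open_vimage[OF _ continuous_on_product_coordinates] by (simp add: vimage_def)

lemma closed_fun_component: "closed K \<Longrightarrow> closed {f. f i \<in> K}"
  using closed_vimage[OF _ continuous_on_product_coordinates] by (simp add: vimage_def)

lemma continuous_on_comp_right: "continuous_on S (\<lambda>p::'a \<Rightarrow> 'b::topological_space. p \<circ> q)"
  by (rule continuous_on_coordinatewise_then_product)
     (simp add: o_def continuous_on_subset[OF continuous_on_product_coordinates])

lemma mem_closure_iff_open: "w \<in> closure S \<longleftrightarrow> (\<forall>U. open U \<and> w \<in> U \<longrightarrow> U \<inter> S \<noteq> {})"
proof
  show "w \<in> closure S \<Longrightarrow> \<forall>U. open U \<and> w \<in> U \<longrightarrow> U \<inter> S \<noteq> {}"
    using open_Int_closure_eq_empty by blast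
  assume "\<forall>U. open U \<and> w \<in> U \<longrightarrow> U \<inter> S \<noteq> {}"
  then have "w \<notin> - closure S"
    using closure_subset[of S] by blast
  then show "w \<in> closure S"
    by blast
qed

lemma compact_Inter_nonempty_right_multiples:
  fixes a :: "'t::times \<Rightarrow> 'b::topological_space"
  assumes "compact S" "\<And>s. closed (F s)"
    and fip: "\<forall>G :: 't set. finite G \<longrightarrow> (\<Inter>s\<in>G. range (\<lambda>t. t * s)) \<noteq> {}"
    and "\<And>r. a r \<in> S" "\<And>t s. a (t * s) \<in> F s"
  shows "S \<inter> (\<Inter>s. F s) \<noteq> {}"
proof (rule compact_imp_fip_image[OF assms(1,2)])
  fix G :: "'t set" assume "finite G"
  then obtain r where "r \<in> (\<Inter>s\<in>G. range (\<lambda>t. t * s))"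
    using fip by blast
  then have "a r \<in> S \<inter> (\<Inter>s\<in>G. F s)"
    using assms(4,5) by auto
  then show "S \<inter> (\<Inter>s\<in>G. F s) \<noteq> {}"
    by blast
qed

lemma finite_range_representatives:
  assumes "finite (range P)"
  obtains F where "finite F" "\<And>t. \<exists>f\<in>F. P f = P t"
proof
  show "finite ((\<lambda>S. SOME t. P t = S) ` range P)"
    using assms by blast
  show "\<exists>f\<in>(\<lambda>S. SOME t. P t = S) ` range P. P f = P t" for t
    by (intro bexI[of _ "SOME t'. P t' = P t"] someI[of "\<lambda>t'. P t' = P t" t]) auto
qed

lemma compact_Urysohn_point:
  fixes S :: "'a::t2_space set"
  assumes "compact S" "closed F" "F \<subseteq> S" "w \<in> S" "w \<notin> F"
  obtains g :: "'a \<Rightarrow> real"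
  where "continuous_on S g" "\<And>y. y \<in> S \<Longrightarrow> g y \<in> {0..1}" "\<And>y. y \<in> F \<Longrightarrow> g y = 0" "g w = 1"
proof -
  have "normal_space (top_of_set S)"
    using assms(1) Hausdorff_space_subtopology[OF Hausdorff_space_euclidean_t2]
    by (intro compact_Hausdorff_or_regular_imp_normal_space compact_space_subtopology) auto
  moreover have "closedin (top_of_set S) F" "closedin (top_of_set S) {w}"
    using assms by (auto simp: closedin_closed)
  moreover have "disjnt F {w}"
    using assms(5) by (simp add: disjnt_def)
  ultimately obtain g :: "'a \<Rightarrow> real"
    where "continuous_map (top_of_set S) (top_of_set {0..1}) g" "g ` F \<subseteq> {0}" "g ` {w} \<subseteq> {1}"
    using Urysohn_lemma[where a = 0 and b = 1] by (metis zero_le_one)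
  then show ?thesis
    using that[of g] by (fastforce simp: Pi_iff)
qed

section \<open>Idempotents in compact semigroups of self-maps\<close>

lemma compact_chain_Inter_nonempty:
  assumes "compact S" "\<C> \<noteq> {}" and chain: "\<And>X Y. X \<in> \<C> \<Longrightarrow> Y \<in> \<C> \<Longrightarrow> X \<subseteq> Y \<or> Y \<subseteq> X"
    and members: "\<And>X. X \<in> \<C> \<Longrightarrow> closed X \<and> X \<noteq> {} \<and> X \<subseteq> S"
  shows "\<Inter>\<C> \<noteq> {}"
proof -
  have "S \<inter> \<Inter>\<C> \<noteq> {}"
  proof (rule compact_imp_fip[OF \<open>compact S\<close>])
    fix \<F> assume \<F>: "finite \<F>" "\<F> \<subseteq> \<C>"
    show "S \<inter> \<Inter>\<F> \<noteq> {}"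
    proof (cases "\<F> = {}")
      case False
      have "subset.chain \<C> \<F>"
        using \<F>(2) chain by (auto simp: subset.chain_def)
      then have "\<Inter>\<F> \<in> \<C>"
        using Inter_in_chain[OF \<F>(1) False] \<F>(2) by blast
      with members show ?thesis by blast
    qed (use assms in blast)
  qed (use members in blast)
  then show ?thesis by blast
qed

definition closed_subsemigroup :: "('a::topological_space \<Rightarrow> 'a) set \<Rightarrow> bool" where
  "closed_subsemigroup A \<longleftrightarrow> closed A \<and> A \<noteq> {} \<and> (\<forall>a\<in>A. \<forall>b\<in>A. a \<circ> b \<in> A)"

lemma closed_subsemigroup_chain_Inter:
  assumes "compact S" "\<C> \<noteq> {}" and chain: "\<And>X Y. X \<in> \<C> \<Longrightarrow> Y \<in> \<C> \<Longrightarrow> X \<subseteq> Y \<or> Y \<subseteq> X"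
    and members: "\<And>X. X \<in> \<C> \<Longrightarrow> X \<subseteq> S \<and> closed_subsemigroup X"
  shows "closed_subsemigroup (\<Inter>\<C>)"
proof -
  have "\<Inter>\<C> \<noteq> {}"
    using compact_chain_Inter_nonempty[OF assms(1,2) chain] members
    by (auto simp: closed_subsemigroup_def)
  moreover have "closed (\<Inter>\<C>)" "\<forall>a\<in>\<Inter>\<C>. \<forall>b\<in>\<Inter>\<C>. a \<circ> b \<in> \<Inter>\<C>"
    using members by (auto simp: closed_subsemigroup_def)
  ultimately show ?thesis
    unfolding closed_subsemigroup_def by blast
qed

lemma minimal_closed_subsemigroup_exists:
  fixes S :: "('a::t2_space \<Rightarrow> 'a) set"
  assumes "compact S" "closed_subsemigroup S"
  obtains M where "M \<subseteq> S" "closed_subsemigroup M"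
    "\<And>N. N \<subseteq> M \<Longrightarrow> closed_subsemigroup N \<Longrightarrow> N = M"
proof -
  let ?A = "{X. X \<subseteq> S \<and> closed_subsemigroup X}"
  let ?P = "\<lambda>X Y. Y \<subseteq> X"
  have "\<exists>M\<in>?A. \<forall>X\<in>?A. ?P M X \<longrightarrow> X = M"
  proof (rule predicate_Zorn)
    show "partial_order_on ?A (relation_of ?P ?A)"
      by (rule partial_order_on_relation_ofI) auto
  next
    fix \<C> assume \<C>: "\<C> \<in> Chains (relation_of ?P ?A)"
    then have sub: "\<C> \<subseteq> ?A"
      by (rule Chains_relation_of)
    have chain: "X \<subseteq> Y \<or> Y \<subseteq> X" if "X \<in> \<C>" "Y \<in> \<C>" for X Y
      using \<C> that unfolding Chains_def relation_of_def by blast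
    show "\<exists>U\<in>?A. \<forall>X\<in>\<C>. ?P X U"
    proof (cases "\<C> = {}")
      case True
      then show ?thesis using assms(2) by blast
    next
      case False
      then obtain X where X: "X \<in> \<C>"
        by blast
      then have "X \<subseteq> S"
        using sub by blast
      with Inter_lower[OF X] have "\<Inter>\<C> \<subseteq> S"
        by (rule order_trans)
      moreover have "closed_subsemigroup (\<Inter>\<C>)"
        by (rule closed_subsemigroup_chain_Inter[OF assms(1) False chain]) (use sub in auto)
      ultimately show ?thesis
        by (intro bexI[of _ "\<Inter>\<C>"]) (auto intro: Inter_lower)
    qed
  qed
  then obtain M where M: "M \<in> ?A" "\<forall>N\<in>?A. N \<subseteq> M \<longrightarrow> N = M" ..
  show ?thesis
  proof (rule that)
    show "M \<subseteq> S" "closed_subsemigroup M"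
      using M(1) by auto
    show "N = M" if N: "N \<subseteq> M" "closed_subsemigroup N" for N
    proof -
      have "N \<in> ?A"
        using N M(1) by auto
      then show ?thesis
        using M(2) N(1) by blast
    qed
  qed
qed

lemma closed_subsemigroup_right_translate:
  fixes M :: "('a::t2_space \<Rightarrow> 'a) set"
  assumes "compact M" "closed_subsemigroup M" "u \<in> M"
  shows "closed_subsemigroup ((\<lambda>p. p \<circ> u) ` M)"
proof -
  let ?Mu = "(\<lambda>p. p \<circ> u) ` M"
  have "closed ?Mu"
    by (intro compact_imp_closed_fun compact_continuous_image[OF continuous_on_comp_right]) fact
  moreover have "?Mu \<noteq> {}"
    using assms(3) by blast
  moreover have "a \<circ> b \<in> ?Mu" if ab: "a \<in> ?Mu" "b \<in> ?Mu" for a b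
  proof -
    obtain a' b' where "a' \<in> M" "b' \<in> M" "a = a' \<circ> u" "b = b' \<circ> u"
      using ab by blast
    then show ?thesis
      using assms(2,3) by (intro rev_image_eqI[of "a' \<circ> u \<circ> b'"]) (auto simp: o_assoc closed_subsemigroup_def)
  qed
  ultimately show ?thesis
    unfolding closed_subsemigroup_def by blast
qed

lemma closed_subsemigroup_right_stabilizer:
  fixes M :: "('a::t2_space \<Rightarrow> 'a) set"
  assumes "closed_subsemigroup M" "v \<in> M" "v \<circ> u = u"
  shows "closed_subsemigroup {v \<in> M. v \<circ> u = u}"
proof -
  let ?B = "{v \<in> M. v \<circ> u = u}"
  have "?B = M \<inter> (\<Inter>w. {p. p (u w) \<in> {u w}})"
    by (auto simp: fun_eq_iff)
  moreover have "closed (M \<inter> (\<Inter>w. {p. p (u w) \<in> {u w}}))"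
    using assms(1) unfolding closed_subsemigroup_def
    by (intro closed_Int closed_INT ballI closed_fun_component closed_singleton) auto
  ultimately have "closed ?B"
    by simp
  moreover have "a \<circ> b \<in> ?B" if "a \<in> ?B" "b \<in> ?B" for a b
    using that assms(1) by (simp add: comp_assoc closed_subsemigroup_def)
  ultimately show ?thesis
    using assms(2,3) unfolding closed_subsemigroup_def by blast
qed

text \<open>Ellis--Numakura: for \<open>u\<close> in a minimal closed subsemigroup \<open>M\<close>, minimality forces \<open>M \<circ> u = M\<close>,
  so the stabilizer \<open>{v \<in> M. v \<circ> u = u}\<close> is nonempty and hence all of \<open>M\<close>.\<close>

lemma compact_subsemigroup_has_idempotent:
  fixes S :: "('a::t2_space \<Rightarrow> 'a) set"
  assumes "compact S" "closed_subsemigroup S"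
  shows "\<exists>u\<in>S. u \<circ> u = u"
proof -
  obtain M where M: "M \<subseteq> S" "closed_subsemigroup M"
    "\<And>N. N \<subseteq> M \<Longrightarrow> closed_subsemigroup N \<Longrightarrow> N = M"
    using minimal_closed_subsemigroup_exists[OF assms] by metis
  obtain u where u: "u \<in> M"
    using M(2) by (auto simp: closed_subsemigroup_def)
  have "compact M"
    using compact_Int_closed[OF assms(1), of M] M(1,2) by (simp add: Int_absorb1 closed_subsemigroup_def)
  have "(\<lambda>p. p \<circ> u) ` M \<subseteq> M"
    using M(2) u by (auto simp: closed_subsemigroup_def)
  from this closed_subsemigroup_right_translate[OF \<open>compact M\<close> M(2) u]
  have "(\<lambda>p. p \<circ> u) ` M = M"
    by (rule M(3))
  then obtain v where "v \<in> M" "v \<circ> u = u"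
    using u by (metis imageE)
  then have "closed_subsemigroup {v \<in> M. v \<circ> u = u}"
    by (rule closed_subsemigroup_right_stabilizer[OF M(2)])
  then have "{v \<in> M. v \<circ> u = u} = M"
    by (intro M(3)) auto
  then show ?thesis
    using u M(1) by blast
qed

section \<open>Invariant means\<close>

lemma Cb_iff: "f \<in> Cb \<longleftrightarrow> continuous_on UNIV f \<and> (\<exists>B. \<forall>s. \<bar>f s\<bar> \<le> B)"
  unfolding Cb_def bounded_real by auto

lemma Cb_const: "(\<lambda>s. c) \<in> Cb"
  unfolding Cb_iff by (auto intro: continuous_intros)

lemma Cb_add:
  assumes "f \<in> Cb" "g \<in> Cb"
  shows "(\<lambda>s. f s + g s) \<in> Cb"
proof -
  obtain B C where "\<And>s. \<bar>f s\<bar> \<le> B" "\<And>s. \<bar>g s\<bar> \<le> C"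
    using assms unfolding Cb_iff by blast
  then have "\<bar>f s + g s\<bar> \<le> B + C" for s
    by (meson abs_triangle_ineq add_mono order_trans)
  then show ?thesis
    using assms unfolding Cb_iff by (auto intro: continuous_intros)
qed

lemma Cb_sum: "finite K \<Longrightarrow> (\<And>k. k \<in> K \<Longrightarrow> f k \<in> Cb) \<Longrightarrow> (\<lambda>s. \<Sum>k\<in>K. f k s) \<in> Cb"
  by (induction K rule: finite_induct) (simp_all add: Cb_const Cb_add)

definition invariant_mean :: "(('t::{topological_space, times} \<Rightarrow> real) \<Rightarrow> real) \<Rightarrow> bool" where
  "invariant_mean m \<longleftrightarrow>
      (\<forall>f\<in>Cb. \<forall>g\<in>Cb. \<forall>a b. m (\<lambda>s. a * f s + b * g s) = a * m f + b * m g)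
    \<and> (\<forall>f\<in>Cb. (\<forall>s. f s \<ge> 0) \<longrightarrow> m f \<ge> 0)
    \<and> m (\<lambda>_. 1) = 1
    \<and> (\<forall>f\<in>Cb. \<forall>t. m (\<lambda>s. f (t * s)) = m f)"

lemma amenable_iff_invariant_mean: "amenable TYPE('t) \<longleftrightarrow> (\<exists>m :: ('t::{topological_space, times} \<Rightarrow> real) \<Rightarrow> real. invariant_mean m)"
  unfolding amenable_def invariant_mean_def ..

context
  fixes m :: "('t::{topological_space, times} \<Rightarrow> real) \<Rightarrow> real"
  assumes mean: "invariant_mean m"
begin

lemma invariant_mean_linear: "f \<in> Cb \<Longrightarrow> g \<in> Cb \<Longrightarrow> m (\<lambda>s. a * f s + b * g s) = a * m f + b * m g"
  using mean by (simp add: invariant_mean_def)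

lemma invariant_mean_add: "f \<in> Cb \<Longrightarrow> g \<in> Cb \<Longrightarrow> m (\<lambda>s. f s + g s) = m f + m g"
  using invariant_mean_linear[of f g 1 1] by simp

lemma invariant_mean_zero: "m (\<lambda>_. 0) = 0"
  using invariant_mean_linear[OF Cb_const Cb_const, of 0 _ 0 _] by simp

lemma invariant_mean_translate: "f \<in> Cb \<Longrightarrow> m (\<lambda>s. f (t * s)) = m f"
  using mean by (simp add: invariant_mean_def)

lemma invariant_mean_sum:
  "finite K \<Longrightarrow> (\<And>k. k \<in> K \<Longrightarrow> f k \<in> Cb) \<Longrightarrow> m (\<lambda>s. \<Sum>k\<in>K. f k s) = (\<Sum>k\<in>K. m (f k))"
  by (induction K rule: finite_induct) (simp_all add: invariant_mean_zero invariant_mean_add Cb_sum)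

lemma invariant_mean_lower_bound:
  assumes "f \<in> Cb" "\<And>s. c \<le> f s"
  shows "c \<le> m f"
proof -
  have "0 \<le> m (\<lambda>s. 1 * f s + (- c) * 1)"
    using mean assms Cb_add[OF assms(1) Cb_const[of "- c"]] by (simp add: invariant_mean_def)
  also have "\<dots> = m f - c"
    using invariant_mean_linear[OF assms(1) Cb_const, of 1 "- c" 1] mean
    by (simp add: invariant_mean_def)
  finally show ?thesis
    by simp
qed

end

section \<open>Limit sets of semiflows\<close>

locale semiflow_system =
  fixes act :: "'t::topological_monoid_mult \<Rightarrow> 'x::topological_space \<Rightarrow> 'x"
  assumes semiflow: "semiflow act"
begin

lemma act_one [simp]: "act 1 w = w"
  using semiflow by (simp add: semiflow_def)

lemma act_mult: "act (s * t) w = act s (act t w)"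
  using semiflow by (simp add: semiflow_def)

lemma continuous_on_act_pair: "continuous_on UNIV (\<lambda>p. act (fst p) (snd p))"
  using semiflow by (simp add: semiflow_def)

lemma continuous_on_act: "continuous_on S (act t)"
proof -
  have "continuous_on UNIV (\<lambda>w. act (fst (t, w)) (snd (t, w)))"
    by (rule continuous_on_compose2[OF continuous_on_act_pair]) (auto intro: continuous_intros)
  then show ?thesis
    by (auto intro: continuous_on_subset)
qed

lemma continuous_on_act_orbit_map: "continuous_on S (\<lambda>s. act s w)"
proof -
  have "continuous_on UNIV (\<lambda>s. act (fst (s, w)) (snd (s, w)))"
    by (rule continuous_on_compose2[OF continuous_on_act_pair]) (auto intro: continuous_intros)
  then show ?thesis
    by (auto intro: continuous_on_subset)
qed

lemma act_in_orbit: "act t w \<in> orbit act w"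
  by (simp add: orbit_def)

lemma self_in_orbit: "w \<in> orbit act w"
  using act_in_orbit[of 1 w] by simp

lemma self_in_closure_orbit: "w \<in> closure (orbit act w)"
  using self_in_orbit closure_subset by blast

lemma act_closure_orbit: "v \<in> closure (orbit act w) \<Longrightarrow> act t v \<in> closure (orbit act w)"
proof -
  have "act t ` orbit act w \<subseteq> orbit act w"
    by (auto simp: orbit_def act_mult[symmetric])
  then have "act t ` closure (orbit act w) \<subseteq> closure (orbit act w)"
    by (intro image_closure_subset[OF continuous_on_act]) (auto intro: closure_subset[THEN subsetD])
  then show "v \<in> closure (orbit act w) \<Longrightarrow> act t v \<in> closure (orbit act w)"
    by blast
qed

lemma mem_omega_set_iff: "w \<in> omega_set act x \<longleftrightarrow> (\<forall>s. w \<in> closure (orbit act (act s x)))"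
  unfolding omega_set_def mem_closure_iff_open orbit_def by blast

lemma omega_set_eq: "omega_set act x = (\<Inter>s. closure (orbit act (act s x)))"
  using mem_omega_set_iff by blast

lemma closed_omega_set: "closed (omega_set act x)"
  unfolding omega_set_eq by (simp add: closed_INT)

lemma omega_set_subset_closure_orbit: "omega_set act x \<subseteq> closure (orbit act x)"
  unfolding omega_set_eq using INT_lower[of 1 UNIV "\<lambda>s. closure (orbit act (act s x))"] by simp

lemma act_omega_set: "w \<in> omega_set act x \<Longrightarrow> act t w \<in> omega_set act x"
  unfolding mem_omega_set_iff using act_closure_orbit by blast

lemma orbit_subset_omega_set: "w \<in> omega_set act x \<Longrightarrow> orbit act w \<subseteq> omega_set act x"
  using act_omega_set by (auto simp: orbit_def)

end

locale equicontinuous_limit_set = semiflow_system act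
  for act :: "'t::topological_monoid_mult \<Rightarrow> 'x::{uniform_space, t2_space} \<Rightarrow> 'x" +
  fixes x :: 'x
  assumes right_multiples_fip: "\<forall>F :: 't set. finite F \<longrightarrow> (\<Inter>s\<in>F. range (\<lambda>t. t * s)) \<noteq> {}"
    and compact_closure_orbit: "compact (closure (orbit act x))"
    and omega_equicontinuous: "omega_set act x \<subseteq> Equi act"
begin

abbreviation (input) \<Omega> :: "'x set" where "\<Omega> \<equiv> omega_set act x"

lemma compact_omega_set: "compact \<Omega>"
  using compact_Int_closed[OF compact_closure_orbit closed_omega_set[of x]]
    omega_set_subset_closure_orbit[of x]
  by (simp add: Int_absorb1)

lemma omega_set_nonempty: "\<Omega> \<noteq> {}"
proof -
  have "closure (orbit act x) \<inter> (\<Inter>s. closure (orbit act (act s x))) \<noteq> {}"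
    by (rule compact_Inter_nonempty_right_multiples[where a = "\<lambda>r. act r x"])
       (use compact_closure_orbit right_multiples_fip in
        \<open>auto simp: act_mult intro: act_in_orbit closure_subset[THEN subsetD]\<close>)
  then show ?thesis
    by (metis Int_empty_right omega_set_eq)
qed

lemma omega_equicontinuousE:
  assumes "w \<in> \<Omega>" "E \<in> UX"
  obtains U where "open U" "w \<in> U" "\<And>t y. y \<in> U \<Longrightarrow> (act t w, act t y) \<in> E"
proof -
  have "w \<in> Equi act"
    using assms(1) omega_equicontinuous by blast
  then obtain U where "open U" "w \<in> U" "\<forall>t. \<forall>y\<in>U. (act t w, act t y) \<in> E"
    using assms(2) unfolding Equi_def by blast
  then show ?thesis
    using that by blast
qed

text \<open>Equicontinuity at a point \<open>n\<close> of a closed invariant \<open>N \<subseteq> \<Omega>\<close> transports the approach of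
  the orbit of \<open>x\<close> to \<open>n\<close> into an approach of the orbit of \<open>n\<close> to any \<open>w \<in> \<Omega>\<close>.\<close>

lemma minimal_omega_set: "minimal_set act \<Omega>"
  unfolding minimal_set_def
proof (intro conjI allI impI)
  show "\<Omega> \<noteq> {}" "closed \<Omega>"
    by (fact omega_set_nonempty, fact closed_omega_set)
  show "invariant act \<Omega>"
    using act_omega_set by (auto simp: invariant_def)
  fix N assume N: "N \<subseteq> \<Omega> \<and> N \<noteq> {} \<and> closed N \<and> invariant act N"
  then obtain n where n: "n \<in> N" "n \<in> \<Omega>"
    by blast
  have "w \<in> N" if w: "w \<in> \<Omega>" for w
  proof (rule closed_UX_approx_mem)
    show "closed N"
      using N by blast
    fix E :: "('x \<times> 'x) set" assume "E \<in> UX"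
    then obtain D where D: "D \<in> UX" "\<And>a b c. (a, b) \<in> D \<Longrightarrow> (b, c) \<in> D \<Longrightarrow> (a, c) \<in> E"
      using UX_transE by metis
    obtain U where U: "open U" "n \<in> U" "\<And>t y. y \<in> U \<Longrightarrow> (act t n, act t y) \<in> D"
      using omega_equicontinuousE[OF n(2) D(1)] by metis
    have "\<exists>s. act s (act 1 x) \<in> U"
      using n(2) U(1,2) unfolding omega_set_def by blast
    then obtain s where s: "act s x \<in> U"
      by auto
    obtain V where V: "open V" "w \<in> V" "\<And>y. y \<in> V \<Longrightarrow> (w, y) \<in> D"
      using UX_nhdsE[OF D(1)] by metis
    have "\<exists>t. act t (act s x) \<in> V"
      using w V(1,2) unfolding omega_set_def by blast
    then obtain t where t: "act t (act s x) \<in> V"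
      by blast
    have "(w, act t n) \<in> E"
      using D(2)[OF V(3)[OF t] UX_sym[OF D(1) U(3)[OF s]]] .
    moreover have "act t n \<in> N"
      using N n(1) by (auto simp: invariant_def)
    ultimately show "\<exists>y\<in>N. (w, y) \<in> E"
      by blast
  qed
  then show "N = \<Omega>"
    using N by blast
qed

lemma closure_orbit_eq_omega_set:
  assumes "w \<in> \<Omega>"
  shows "closure (orbit act w) = \<Omega>"
proof -
  have "closure (orbit act w) \<subseteq> \<Omega>"
    using orbit_subset_omega_set[OF assms] closed_omega_set by (simp add: closure_minimal)
  moreover have "closure (orbit act w) \<noteq> {}"
    using self_in_orbit[of w] closure_subset by blast
  moreover have "invariant act (closure (orbit act w))"
    using act_closure_orbit by (auto simp: invariant_def)
  ultimately show ?thesis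
    using minimal_omega_set unfolding minimal_set_def by blast
qed

lemma finite_return_times:
  assumes "open V" "V \<inter> \<Omega> \<noteq> {}"
  obtains K where "finite K" "\<And>y. y \<in> \<Omega> \<Longrightarrow> \<exists>k\<in>K. act k y \<in> V"
proof -
  have "\<Omega> \<subseteq> (\<Union>k. act k -` V)"
  proof
    fix y assume "y \<in> \<Omega>"
    then have "V \<inter> closure (orbit act y) \<noteq> {}"
      using closure_orbit_eq_omega_set assms(2) by simp
    then have "V \<inter> orbit act y \<noteq> {}"
      using assms(1) open_Int_closure_eq_empty by blast
    then show "y \<in> (\<Union>k. act k -` V)"
      by (auto simp: orbit_def)
  qed
  moreover have "open (act k -` V)" for k
    using open_vimage[OF assms(1) continuous_on_act] .
  ultimately obtain K where "finite K" "\<Omega> \<subseteq> (\<Union>k\<in>K. act k -` V)"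
    using compactE_image[OF compact_omega_set, of UNIV "\<lambda>k. act k -` V"] by metis
  then show ?thesis
    using that by blast
qed

lemma ap_point_omega_set:
  assumes "w \<in> \<Omega>"
  shows "ap_point act w"
  unfolding ap_point_def syndetic_def
proof (intro allI impI)
  fix U assume "open U \<and> w \<in> U"
  then obtain K where K: "finite K" "\<And>y. y \<in> \<Omega> \<Longrightarrow> \<exists>k\<in>K. act k y \<in> U"
    using finite_return_times[of U] assms by blast
  have "(\<lambda>k. k * t) ` K \<inter> {t. act t w \<in> U} \<noteq> {}" for t
  proof -
    obtain k where "k \<in> K" "act k (act t w) \<in> U"
      using K(2)[OF act_omega_set[OF assms]] by blast
    then show ?thesis
      by (auto simp: act_mult)
  qed
  then show "\<exists>K. compact K \<and> (\<forall>t. (\<lambda>k. k * t) ` K \<inter> {t. act t w \<in> U} \<noteq> {})"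
    using K(1) finite_imp_compact by blast
qed

lemma uniformly_finite_return_times:
  assumes "E \<in> UX"
  obtains K where "finite K" "\<And>z v. z \<in> \<Omega> \<Longrightarrow> v \<in> \<Omega> \<Longrightarrow> \<exists>k\<in>K. (act k z, v) \<in> E"
proof -
  obtain D where D: "D \<in> UX" "\<And>a b c. (a, b) \<in> D \<Longrightarrow> (b, c) \<in> D \<Longrightarrow> (a, c) \<in> E"
    using UX_transE[OF assms] by metis
  obtain Y where Y: "Y \<subseteq> \<Omega>" "finite Y" "\<And>v. v \<in> \<Omega> \<Longrightarrow> \<exists>y\<in>Y. (y, v) \<in> D"
    using compact_UX_netE[OF compact_omega_set D(1)] by metis
  have "\<exists>K. finite K \<and> (\<forall>z\<in>\<Omega>. \<exists>k\<in>K. (act k z, y) \<in> D)" if "y \<in> Y" for y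
  proof -
    obtain V where V: "open V" "y \<in> V" "\<And>v. v \<in> V \<Longrightarrow> (y, v) \<in> D"
      using UX_nhdsE[OF D(1)] by metis
    have "V \<inter> \<Omega> \<noteq> {}"
      using that Y(1) V(2) by blast
    then obtain K where "finite K" "\<And>z. z \<in> \<Omega> \<Longrightarrow> \<exists>k\<in>K. act k z \<in> V"
      using finite_return_times[OF V(1)] by metis
    then show ?thesis
      using V(3) UX_sym[OF D(1)] by meson
  qed
  then obtain K where K: "\<And>y. y \<in> Y \<Longrightarrow> finite (K y)"
    "\<And>y z. y \<in> Y \<Longrightarrow> z \<in> \<Omega> \<Longrightarrow> \<exists>k\<in>K y. (act k z, y) \<in> D"
    by metis
  have "\<exists>k\<in>(\<Union>y\<in>Y. K y). (act k z, v) \<in> E" if "z \<in> \<Omega>" "v \<in> \<Omega>" for z v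
  proof -
    obtain y where y: "y \<in> Y" "(y, v) \<in> D"
      using Y(3) \<open>v \<in> \<Omega>\<close> by blast
    obtain k where "k \<in> K y" "(act k z, y) \<in> D"
      using K(2)[OF y(1) \<open>z \<in> \<Omega>\<close>] by blast
    then show ?thesis
      using D(2)[OF _ y(2)] y(1) by blast
  qed
  moreover have "finite (\<Union>y\<in>Y. K y)"
    using K(1) Y(2) by blast
  ultimately show ?thesis
    using that by blast
qed

lemma omega_set_subset_RE: "\<Omega> \<subseteq> RE act"
proof
  fix w assume w: "w \<in> \<Omega>"
  show "w \<in> RE act"
    unfolding RE_def
  proof (intro CollectI ballI)
    fix E :: "('x \<times> 'x) set" assume "E \<in> UX"
    then obtain K where K: "finite K" "\<And>z v. z \<in> \<Omega> \<Longrightarrow> v \<in> \<Omega> \<Longrightarrow> \<exists>k\<in>K. (act k z, v) \<in> E"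
      using uniformly_finite_return_times by metis
    have "orbit act w \<subseteq> ent_image E ((\<lambda>k. act k (act t w)) ` K)" for t
      using K(2)[OF act_omega_set[OF w]] orbit_subset_omega_set[OF w] by (fastforce simp: ent_image_def)
    then show "\<exists>K. compact K \<and> (\<forall>t. orbit act w \<subseteq> ent_image E ((\<lambda>k. act k (act t w)) ` K))"
      using K(1) finite_imp_compact by blast
  qed
qed

section \<open>The enveloping semigroup\<close>

text \<open>To work in a compact space of self-maps of the type \<open>'x\<close>, the action is restricted to the
  orbit closure of \<open>x\<close> and extended by the identity outside it.\<close>

definition act_C :: "'t \<Rightarrow> 'x \<Rightarrow> 'x" where
  "act_C t w = (if w \<in> closure (orbit act x) then act t w else w)"

definition enveloping_semigroup :: "('x \<Rightarrow> 'x) set" where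
  "enveloping_semigroup = closure (range act_C)"

definition orbit_closure_maps :: "('x \<Rightarrow> 'x) set" where
  "orbit_closure_maps = {f. \<forall>w. f w \<in> (if w \<in> closure (orbit act x) then closure (orbit act x) else {w})}"

lemma act_C_mult: "act_C s \<circ> act_C t = act_C (s * t)"
  by (auto simp: fun_eq_iff act_C_def act_closure_orbit act_mult)

lemma act_C_in_orbit_closure_maps: "act_C t \<in> orbit_closure_maps"
  by (simp add: act_C_def orbit_closure_maps_def act_closure_orbit)

lemma compact_orbit_closure_maps: "compact orbit_closure_maps"
proof -
  let ?K = "\<lambda>w. if w \<in> closure (orbit act x) then closure (orbit act x) else {w}"
  have "compactin (product_topology (\<lambda>_. euclidean) UNIV) (PiE UNIV ?K)"
    unfolding compactin_PiE using compact_closure_orbit by auto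
  moreover have "PiE UNIV ?K = orbit_closure_maps"
    unfolding orbit_closure_maps_def PiE_UNIV_domain Pi_def by simp
  ultimately show ?thesis
    by (simp add: euclidean_product_topology compactin_euclidean_iff)
qed

lemma enveloping_semigroup_subset: "enveloping_semigroup \<subseteq> orbit_closure_maps"
  unfolding enveloping_semigroup_def
  using act_C_in_orbit_closure_maps compact_imp_closed_fun[OF compact_orbit_closure_maps]
  by (intro closure_minimal) auto

lemma compact_enveloping_semigroup: "compact enveloping_semigroup"
  using compact_Int_closed[OF compact_orbit_closure_maps, of enveloping_semigroup]
    enveloping_semigroup_subset
  by (simp add: enveloping_semigroup_def Int_absorb1)

lemma act_C_in_enveloping_semigroup: "act_C t \<in> enveloping_semigroup"
  unfolding enveloping_semigroup_def by (simp add: closure_subset[THEN subsetD])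

lemma orbit_closure_mapsD:
  "q \<in> orbit_closure_maps \<Longrightarrow> q w \<in> (if w \<in> closure (orbit act x) then closure (orbit act x) else {w})"
  unfolding orbit_closure_maps_def by blast

lemma continuous_on_comp_act_C: "continuous_on orbit_closure_maps (\<lambda>q. act_C s \<circ> q)"
proof (rule continuous_on_coordinatewise_then_product)
  fix i
  show "continuous_on orbit_closure_maps (\<lambda>q. (act_C s \<circ> q) i)"
  proof (cases "i \<in> closure (orbit act x)")
    case True
    have "continuous_on orbit_closure_maps (\<lambda>q. act s (q i))"
      by (rule continuous_on_compose2[OF continuous_on_act[of UNIV]])
         (auto intro: continuous_on_subset[OF continuous_on_product_coordinates])
    moreover have "(act_C s \<circ> q) i = act s (q i)" if "q \<in> orbit_closure_maps" for q
      using orbit_closure_mapsD[OF that, of i] True by (simp add: act_C_def)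
    ultimately show ?thesis
      using continuous_on_cong by fastforce
  next
    case False
    then have "(act_C s \<circ> q) i = i" if "q \<in> orbit_closure_maps" for q
      using orbit_closure_mapsD[OF that, of i] by (simp add: act_C_def)
    then show ?thesis
      using continuous_on_cong[of _ _ _ "\<lambda>_. i"] by fastforce
  qed
qed

lemma act_C_comp_enveloping_semigroup:
  assumes "q \<in> enveloping_semigroup"
  shows "act_C s \<circ> q \<in> enveloping_semigroup"
proof -
  have "(\<lambda>q. act_C s \<circ> q) ` closure (range act_C) \<subseteq> enveloping_semigroup"
  proof (rule image_closure_subset)
    show "continuous_on (closure (range act_C)) (\<lambda>q. act_C s \<circ> q)"
      using continuous_on_subset[OF continuous_on_comp_act_C enveloping_semigroup_subset]
      by (simp add: enveloping_semigroup_def)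
    show "(\<lambda>q. act_C s \<circ> q) ` range act_C \<subseteq> enveloping_semigroup"
      using act_C_mult act_C_in_enveloping_semigroup by auto
  qed (simp add: enveloping_semigroup_def)
  then show ?thesis
    using assms by (auto simp: enveloping_semigroup_def)
qed

lemma comp_enveloping_semigroup:
  assumes "p \<in> enveloping_semigroup" "q \<in> enveloping_semigroup"
  shows "p \<circ> q \<in> enveloping_semigroup"
proof -
  have "(\<lambda>p. p \<circ> q) ` closure (range act_C) \<subseteq> enveloping_semigroup"
  proof (rule image_closure_subset)
    show "(\<lambda>p. p \<circ> q) ` range act_C \<subseteq> enveloping_semigroup"
      using act_C_comp_enveloping_semigroup[OF assms(2)] by auto
  qed (simp_all add: continuous_on_comp_right enveloping_semigroup_def)
  then show ?thesis
    using assms(1) by (auto simp: enveloping_semigroup_def)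
qed

lemma enveloping_semigroup_apply:
  assumes "p \<in> enveloping_semigroup" "w \<in> closure (orbit act x)"
  shows "p w \<in> closure (orbit act w)"
proof -
  have "(\<lambda>p. p w) ` closure (range act_C) \<subseteq> closure (orbit act w)"
  proof (rule image_closure_subset)
    show "continuous_on (closure (range act_C)) (\<lambda>p. p w)"
      by (rule continuous_on_subset[OF continuous_on_product_coordinates]) simp
    show "(\<lambda>p. p w) ` range act_C \<subseteq> closure (orbit act w)"
      using assms(2) by (auto simp: act_C_def act_in_orbit closure_subset[THEN subsetD])
  qed simp
  then show ?thesis
    using assms(1) by (auto simp: enveloping_semigroup_def)
qed

text \<open>The core is nonempty because the right ideals \<open>T s\<close> have the finite intersection property.\<close>

definition enveloping_core :: "('x \<Rightarrow> 'x) set" where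
  "enveloping_core = (\<Inter>s. (\<lambda>p. p \<circ> act_C s) ` enveloping_semigroup)"

lemma closed_right_translate_enveloping_semigroup: "closed ((\<lambda>p. p \<circ> act_C s) ` enveloping_semigroup)"
  by (intro compact_imp_closed_fun compact_continuous_image[OF continuous_on_comp_right]
      compact_enveloping_semigroup)

lemma enveloping_core_subset: "enveloping_core \<subseteq> enveloping_semigroup"
proof -
  have "enveloping_core \<subseteq> (\<lambda>p. p \<circ> act_C 1) ` enveloping_semigroup"
    unfolding enveloping_core_def by (rule INT_lower) simp
  also have "\<dots> \<subseteq> enveloping_semigroup"
    using comp_enveloping_semigroup act_C_in_enveloping_semigroup by auto
  finally show ?thesis .
qed

lemma closed_enveloping_core: "closed enveloping_core"
  unfolding enveloping_core_def
  by (intro closed_INT ballI closed_right_translate_enveloping_semigroup)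

lemma compact_enveloping_core: "compact enveloping_core"
  using compact_Int_closed[OF compact_enveloping_semigroup closed_enveloping_core]
    enveloping_core_subset
  by (simp add: Int_absorb1)

lemma enveloping_core_nonempty: "enveloping_core \<noteq> {}"
proof -
  have "act_C (t * s) \<in> (\<lambda>p. p \<circ> act_C s) ` enveloping_semigroup" for t s
    using act_C_mult[of t s] act_C_in_enveloping_semigroup[of t] by (metis image_eqI)
  then have "enveloping_semigroup \<inter> (\<Inter>s. (\<lambda>p. p \<circ> act_C s) ` enveloping_semigroup) \<noteq> {}"
    by (intro compact_Inter_nonempty_right_multiples[where a = act_C] compact_enveloping_semigroup
        closed_right_translate_enveloping_semigroup right_multiples_fip act_C_in_enveloping_semigroup)
  then show ?thesis
    unfolding enveloping_core_def by blast
qed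

lemma comp_enveloping_core:
  assumes p: "p \<in> enveloping_core" and q: "q \<in> enveloping_core"
  shows "p \<circ> q \<in> enveloping_core"
  unfolding enveloping_core_def
proof
  fix s
  obtain q' where q': "q' \<in> enveloping_semigroup" "q = q' \<circ> act_C s"
    using q unfolding enveloping_core_def by blast
  have "p \<circ> q' \<in> enveloping_semigroup"
    using p q'(1) enveloping_core_subset by (blast intro: comp_enveloping_semigroup)
  then show "p \<circ> q \<in> (\<lambda>p. p \<circ> act_C s) ` enveloping_semigroup"
    using q'(2) by (intro rev_image_eqI[of "p \<circ> q'"]) (simp_all add: comp_assoc)
qed

lemma idempotent_in_enveloping_core: "\<exists>u\<in>enveloping_core. u \<circ> u = u"
  using compact_enveloping_core comp_enveloping_core closed_enveloping_core enveloping_core_nonempty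
  by (intro compact_subsemigroup_has_idempotent) (auto simp: closed_subsemigroup_def)

text \<open>An idempotent \<open>u\<close> of the core maps \<open>x\<close> into \<open>\<Omega>\<close> (it factors through every \<open>act_C s\<close>), and
  \<open>u\<close> sends both \<open>x\<close> and \<open>u x\<close> to \<open>u x\<close>; approximating \<open>u\<close> by some \<open>act_C t\<close> makes \<open>x\<close> and \<open>u x\<close> proximal.\<close>

lemma proximal_point_in_omega_set:
  obtains y where "y \<in> \<Omega>" "\<And>W. open W \<Longrightarrow> y \<in> W \<Longrightarrow> \<exists>t. act t x \<in> W \<and> act t y \<in> W"
proof -
  obtain u where u: "u \<in> enveloping_core" "u \<circ> u = u"
    using idempotent_in_enveloping_core by blast
  have y: "u x \<in> \<Omega>"
    unfolding mem_omega_set_iff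
  proof
    fix s
    obtain p where p: "p \<in> enveloping_semigroup" "u = p \<circ> act_C s"
      using u(1) unfolding enveloping_core_def by blast
    then have "u x = p (act s x)"
      using self_in_closure_orbit by (simp add: act_C_def)
    then show "u x \<in> closure (orbit act (act s x))"
      using enveloping_semigroup_apply[OF p(1)] act_closure_orbit[OF self_in_closure_orbit] by simp
  qed
  have "\<exists>t. act t x \<in> W \<and> act t (u x) \<in> W" if W: "open W" "u x \<in> W" for W
  proof -
    let ?O = "{f. f x \<in> W} \<inter> {f. f (u x) \<in> W}"
    have "u (u x) = u x"
      using u(2) by (metis comp_apply)
    then have "open ?O" "u \<in> ?O"
      using W by (simp_all add: open_Int open_fun_component)
    moreover have "u \<in> closure (range act_C)"
      using u(1) enveloping_core_subset by (auto simp: enveloping_semigroup_def)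
    ultimately have "?O \<inter> range act_C \<noteq> {}"
      unfolding mem_closure_iff_open by blast
    then obtain t where "act_C t x \<in> W" "act_C t (u x) \<in> W"
      by blast
    moreover have "u x \<in> closure (orbit act x)"
      using y omega_set_subset_closure_orbit by blast
    ultimately show ?thesis
      using self_in_closure_orbit by (auto simp: act_C_def)
  qed
  with y show ?thesis
    using that by blast
qed

lemma x_in_AAP: "x \<in> AAP act"
proof -
  obtain y where y: "y \<in> \<Omega>" "\<And>W. open W \<Longrightarrow> y \<in> W \<Longrightarrow> \<exists>t. act t x \<in> W \<and> act t y \<in> W"
    using proximal_point_in_omega_set by metis
  have "\<exists>s. \<forall>t. (act t (act s x), act t (act s y)) \<in> E" if E: "E \<in> UX" for E
  proof -
    obtain D where D: "D \<in> UX" "\<And>a b c. (a, b) \<in> D \<Longrightarrow> (b, c) \<in> D \<Longrightarrow> (a, c) \<in> E"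
      using UX_transE[OF E] by metis
    obtain U where U: "open U" "y \<in> U" "\<And>t v. v \<in> U \<Longrightarrow> (act t y, act t v) \<in> D"
      using omega_equicontinuousE[OF y(1) D(1)] by metis
    obtain s where s: "act s x \<in> U" "act s y \<in> U"
      using y(2)[OF U(1,2)] by blast
    have "(act t (act s x), act t (act s y)) \<in> E" for t
      using D(2)[OF UX_sym[OF D(1) U(3)[OF s(1)]] U(3)[OF s(2)]] by (simp add: act_mult)
    then show ?thesis
      by blast
  qed
  then show ?thesis
    unfolding AAP_def using ap_point_omega_set[OF y(1)] by blast
qed

section \<open>Amenable acting monoids\<close>

lemma orbit_function_in_Cb:
  assumes "w \<in> \<Omega>" "continuous_on \<Omega> g" "\<And>y. y \<in> \<Omega> \<Longrightarrow> g y \<in> {0..1}"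
  shows "(\<lambda>s. g (act s w)) \<in> Cb"
proof -
  have "continuous_on UNIV (\<lambda>s. g (act s w))"
    using act_omega_set[OF assms(1)]
    by (intro continuous_on_compose2[OF assms(2) continuous_on_act_orbit_map]) auto
  moreover have "\<bar>g (act s w)\<bar> \<le> 1" for s
    using assms(3)[OF act_omega_set[OF assms(1)]] by simp
  ultimately show ?thesis
    unfolding Cb_iff by blast
qed

lemma finite_return_times_superlevel:
  fixes g :: "'x \<Rightarrow> real"
  assumes w: "w \<in> \<Omega>" and g: "continuous_on \<Omega> g" "g w = 1"
  obtains K where "finite K" "\<And>s. \<exists>k\<in>K. 1/2 < g (act k (act s w))"
proof -
  obtain A where A: "open A" "A \<inter> \<Omega> = g -` {1/2<..} \<inter> \<Omega>"
    using g(1) unfolding continuous_on_open_invariant by (meson open_greaterThan)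
  have "w \<in> A"
    using A(2) w g(2) by auto
  then obtain K where K: "finite K" "\<And>y. y \<in> \<Omega> \<Longrightarrow> \<exists>k\<in>K. act k y \<in> A"
    using finite_return_times[OF A(1)] w by blast
  have "\<exists>k\<in>K. 1/2 < g (act k (act s w))" for s
  proof -
    obtain k where k: "k \<in> K" "act k (act s w) \<in> A"
      using K(2) act_omega_set[OF w] by blast
    moreover have "act k (act s w) \<in> \<Omega>"
      using act_omega_set w by blast
    ultimately have "act k (act s w) \<in> g -` {1/2<..}"
      using A(2) by blast
    with k(1) show ?thesis
      by auto
  qed
  with K(1) show ?thesis
    using that by blast
qed

text \<open>Finitely many left translates of \<open>s \<mapsto> g (act s w)\<close> sum to at least \<open>1/2\<close>;
  all of them have the same mean.\<close>

lemma invariant_mean_orbit_function_pos: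
  assumes m: "invariant_mean m" and w: "w \<in> \<Omega>"
    and g: "continuous_on \<Omega> g" "\<And>y. y \<in> \<Omega> \<Longrightarrow> g y \<in> {0..1}" "g w = 1"
  shows "0 < m (\<lambda>s. g (act s w))"
proof -
  obtain K where K: "finite K" "\<And>s. \<exists>k\<in>K. 1/2 < g (act k (act s w))"
    using finite_return_times_superlevel[OF w g(1,3)] by metis
  define \<Phi> where "\<Phi> k = (\<lambda>s. g (act k (act s w)))" for k
  have in_omega: "act k (act s w) \<in> \<Omega>" for k s
    using act_omega_set w by blast
  have \<Phi>_Cb: "\<Phi> k \<in> Cb" for k
  proof -
    have "continuous_on \<Omega> (g \<circ> act k)"
      using act_omega_set
      by (intro continuous_on_compose continuous_on_act continuous_on_subset[OF g(1)]) blast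
    then show ?thesis
      using orbit_function_in_Cb[OF w, of "g \<circ> act k"] g(2) act_omega_set
      by (simp add: \<Phi>_def)
  qed
  have "1/2 \<le> (\<Sum>k\<in>K. \<Phi> k s)" for s
  proof -
    obtain k where k: "k \<in> K" "1/2 < \<Phi> k s"
      using K(2) by (auto simp: \<Phi>_def)
    moreover have "\<Phi> k s \<le> (\<Sum>k\<in>K. \<Phi> k s)"
      using k(1) K(1) g(2)[OF in_omega] by (intro member_le_sum) (auto simp: \<Phi>_def)
    ultimately show ?thesis
      by linarith
  qed
  moreover have "(\<lambda>s. \<Sum>k\<in>K. \<Phi> k s) \<in> Cb"
    using Cb_sum[OF K(1), of \<Phi>] \<Phi>_Cb by blast
  ultimately have "1/2 \<le> m (\<lambda>s. \<Sum>k\<in>K. \<Phi> k s)"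
    by (intro invariant_mean_lower_bound[OF m])
  also have "\<dots> = (\<Sum>k\<in>K. m (\<Phi> k))"
    using invariant_mean_sum[OF m K(1), of \<Phi>] \<Phi>_Cb by blast
  also have "\<dots> = real (card K) * m (\<lambda>s. g (act s w))"
    using invariant_mean_translate[OF m \<Phi>_Cb[of 1]] by (simp add: \<Phi>_def act_mult)
  finally have "1/2 \<le> real (card K) * m (\<lambda>s. g (act s w))" .
  moreover have "real (card K) * m (\<lambda>s. g (act s w)) \<le> 0" if "m (\<lambda>s. g (act s w)) \<le> 0"
    using that by (simp add: mult_nonneg_nonpos)
  ultimately show ?thesis
    by linarith
qed

lemma act_omega_set_surjective:
  assumes "amenable TYPE('t)"
  shows "act r ` \<Omega> = \<Omega>"
proof
  show "act r ` \<Omega> \<subseteq> \<Omega>"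
    using act_omega_set by blast
  obtain m :: "('t \<Rightarrow> real) \<Rightarrow> real" where m: "invariant_mean m"
    using assms amenable_iff_invariant_mean by blast
  show "\<Omega> \<subseteq> act r ` \<Omega>"
  proof (rule ccontr)
    assume "\<not> \<Omega> \<subseteq> act r ` \<Omega>"
    then obtain w where w: "w \<in> \<Omega>" "w \<notin> act r ` \<Omega>"
      by blast
    have "closed (act r ` \<Omega>)"
      by (intro compact_imp_closed compact_continuous_image[OF continuous_on_act compact_omega_set])
    moreover have "act r ` \<Omega> \<subseteq> \<Omega>"
      using act_omega_set by blast
    ultimately obtain g :: "'x \<Rightarrow> real" where g: "continuous_on \<Omega> g" "\<And>y. y \<in> \<Omega> \<Longrightarrow> g y \<in> {0..1}"
      "\<And>y. y \<in> act r ` \<Omega> \<Longrightarrow> g y = 0" "g w = 1"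
      using compact_Urysohn_point[OF compact_omega_set _ _ w] by metis
    have "0 < m (\<lambda>s. g (act s w))"
      by (rule invariant_mean_orbit_function_pos[OF m w(1) g(1,2,4)])
    also have "m (\<lambda>s. g (act s w)) = m (\<lambda>s. g (act (r * s) w))"
      using invariant_mean_translate[OF m orbit_function_in_Cb[OF w(1) g(1,2)]] by simp
    also have "(\<lambda>s. g (act (r * s) w)) = (\<lambda>_. 0)"
      using g(3) act_omega_set[OF w(1)] by (simp add: act_mult)
    finally show False
      by (simp add: invariant_mean_zero[OF m])
  qed
qed

lemma omega_equicontinuous_entourageE:
  assumes "z \<in> \<Omega>" "E \<in> UX"
  obtains G where "G \<in> UX" "\<And>z' y t. (z, z') \<in> G \<Longrightarrow> (z', y) \<in> G \<Longrightarrow> (act t z', act t y) \<in> E"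
proof -
  obtain D where D: "D \<in> UX" "\<And>a b c. (a, b) \<in> D \<Longrightarrow> (b, c) \<in> D \<Longrightarrow> (a, c) \<in> E"
    using UX_transE[OF assms(2)] by metis
  obtain U where U: "open U" "z \<in> U" "\<And>t v. v \<in> U \<Longrightarrow> (act t z, act t v) \<in> D"
    using omega_equicontinuousE[OF assms(1) D(1)] by metis
  obtain F where F: "F \<in> UX" "\<And>y. (z, y) \<in> F \<Longrightarrow> y \<in> U"
    using open_UXE[OF U(1,2)] by metis
  obtain G where G: "G \<in> UX" "\<And>a b c. (a, b) \<in> G \<Longrightarrow> (b, c) \<in> G \<Longrightarrow> (a, c) \<in> F"
    using UX_transE[OF F(1)] by metis
  have "(act t z', act t y) \<in> E" if "(z, z') \<in> G" "(z', y) \<in> G" for z' y t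
  proof -
    have "z' \<in> U" "y \<in> U"
      using F(2) G(2)[OF that(1) UX_refl[OF G(1)]] G(2)[OF that] by auto
    then show ?thesis
      using D(2)[OF UX_sym[OF D(1) U(3)] U(3)] by blast
  qed
  with G(1) show ?thesis
    using that by blast
qed

text \<open>Equicontinuity on the compact set \<open>\<Omega>\<close> is uniform: a Lebesgue-number argument.\<close>

lemma omega_uniformly_equicontinuousE:
  assumes "E \<in> UX"
  obtains \<delta> where "\<delta> \<in> UX" "\<And>z y t. z \<in> \<Omega> \<Longrightarrow> (z, y) \<in> \<delta> \<Longrightarrow> (act t z, act t y) \<in> E"
proof -
  have "\<forall>z\<in>\<Omega>. \<exists>G. G \<in> UX \<and> (\<forall>z' y t. (z, z') \<in> G \<longrightarrow> (z', y) \<in> G \<longrightarrow> (act t z', act t y) \<in> E)"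
    using omega_equicontinuous_entourageE[OF _ assms] by metis
  then obtain G where G: "\<And>z. z \<in> \<Omega> \<Longrightarrow> G z \<in> UX"
    "\<And>z z' y t. z \<in> \<Omega> \<Longrightarrow> (z, z') \<in> G z \<Longrightarrow> (z', y) \<in> G z \<Longrightarrow> (act t z', act t y) \<in> E"
    by metis
  have "\<forall>z\<in>\<Omega>. \<exists>V. open V \<and> z \<in> V \<and> (\<forall>v\<in>V. (z, v) \<in> G z)"
    using UX_nhdsE[OF G(1)] by metis
  then obtain V where V: "\<And>z. z \<in> \<Omega> \<Longrightarrow> open (V z)" "\<And>z. z \<in> \<Omega> \<Longrightarrow> z \<in> V z"
    "\<And>z v. z \<in> \<Omega> \<Longrightarrow> v \<in> V z \<Longrightarrow> (z, v) \<in> G z"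
    by metis
  obtain Z where Z: "Z \<subseteq> \<Omega>" "finite Z" "\<Omega> \<subseteq> (\<Union>z\<in>Z. V z)"
    using compactE_image[OF compact_omega_set, of \<Omega> V] V(1,2) by blast
  have "(\<Inter>z\<in>Z. G z) \<in> UX"
    using UX_INT[OF Z(2)] G(1) Z(1) by blast
  moreover have "(act t z', act t y) \<in> E" if z': "z' \<in> \<Omega>" "(z', y) \<in> (\<Inter>z\<in>Z. G z)" for z' y t
  proof -
    obtain z where z: "z \<in> Z" "z' \<in> V z"
      using Z(3) z'(1) by blast
    then have "z \<in> \<Omega>"
      using Z(1) by blast
    moreover have "(z', y) \<in> G z"
      using z(1) z'(2) by blast
    ultimately show ?thesis
      using G(2) V(3)[OF _ z(2)] by blast
  qed
  ultimately show ?thesis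
    using that by blast
qed

text \<open>The maps \<open>act t\<close> on \<open>\<Omega>\<close> form a totally bounded family: by uniform equicontinuity, \<open>act t\<close> is
  determined up to a small error by which cells of a finite cover of \<open>\<Omega>\<close> contain the images of a finite net.\<close>

lemma act_omega_set_finite_netE:
  assumes "E \<in> UX"
  obtains F where "finite F" "\<And>t. \<exists>f\<in>F. \<forall>z\<in>\<Omega>. (act t z, act f z) \<in> E"
proof -
  obtain B where B: "B \<in> UX"
    "\<And>a b c d. (a, b) \<in> B \<Longrightarrow> (b, c) \<in> B \<Longrightarrow> (c, d) \<in> B \<Longrightarrow> (a, d) \<in> E"
    using UX_trans3E[OF assms] by metis
  obtain B' where B': "B' \<in> UX" "\<And>a b c. (a, b) \<in> B' \<Longrightarrow> (b, c) \<in> B' \<Longrightarrow> (a, c) \<in> B"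
    using UX_transE[OF B(1)] by metis
  obtain \<delta> where \<delta>: "\<delta> \<in> UX" "\<And>z y t. z \<in> \<Omega> \<Longrightarrow> (z, y) \<in> \<delta> \<Longrightarrow> (act t z, act t y) \<in> B"
    using omega_uniformly_equicontinuousE[OF B(1)] by metis
  obtain Z where Z: "Z \<subseteq> \<Omega>" "finite Z" "\<And>z. z \<in> \<Omega> \<Longrightarrow> \<exists>z0\<in>Z. (z0, z) \<in> \<delta>"
    using compact_UX_netE[OF compact_omega_set \<delta>(1)] by metis
  obtain W where W: "finite W" "\<And>v. v \<in> \<Omega> \<Longrightarrow> \<exists>w\<in>W. (w, v) \<in> B'"
    using compact_UX_netE[OF compact_omega_set B'(1)] by metis
  define P where "P t = {(z0, w) \<in> Z \<times> W. (w, act t z0) \<in> B'}" for t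
  have "range P \<subseteq> Pow (Z \<times> W)"
    by (auto simp: P_def)
  then have "finite (range P)"
    using Z(2) W(1) by (meson finite_Pow_iff finite_SigmaI finite_subset)
  then obtain F where F: "finite F" "\<And>t. \<exists>f\<in>F. P f = P t"
    using finite_range_representatives by metis
  have "\<forall>z\<in>\<Omega>. (act t z, act f z) \<in> E" if "P f = P t" for t f
  proof
    fix z assume "z \<in> \<Omega>"
    then obtain z0 where z0: "z0 \<in> Z" "(z0, z) \<in> \<delta>"
      using Z(3) by blast
    then have "z0 \<in> \<Omega>"
      using Z(1) by blast
    then obtain w where w: "w \<in> W" "(w, act t z0) \<in> B'"
      using W(2)[OF act_omega_set] by blast
    then have "(z0, w) \<in> P f"
      using that z0(1) by (simp add: P_def)
    then have "(w, act f z0) \<in> B'"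
      by (simp add: P_def)
    then have "(act t z0, act f z0) \<in> B"
      using B'(2) UX_sym[OF B'(1) w(2)] by blast
    then show "(act t z, act f z) \<in> E"
      using B(2) UX_sym[OF B(1) \<delta>(2)[OF \<open>z0 \<in> \<Omega>\<close> z0(2)]] \<delta>(2)[OF \<open>z0 \<in> \<Omega>\<close> z0(2)] by blast
  qed
  with F show ?thesis
    using that by metis
qed

text \<open>Among the powers \<open>f^(n+1)\<close> two, \<open>f^(i+1)\<close> and \<open>f^(j+1)\<close> with \<open>i < j\<close>, act almost alike on \<open>\<Omega>\<close>;
  since \<open>act (f^(i+1))\<close> maps \<open>\<Omega>\<close> onto itself, \<open>k * f = f^(j-i)\<close> then acts almost as the identity.\<close>

lemma uniform_return_to_identityE:
  assumes "amenable TYPE('t)" "E \<in> UX"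
  obtains k where "\<And>z. z \<in> \<Omega> \<Longrightarrow> (z, act (k * f) z) \<in> E"
proof -
  obtain D where D: "D \<in> UX" "\<And>a b c. (a, b) \<in> D \<Longrightarrow> (b, c) \<in> D \<Longrightarrow> (a, c) \<in> E"
    using UX_transE[OF assms(2)] by metis
  obtain F where F: "finite F" "\<And>t. \<exists>g\<in>F. \<forall>z\<in>\<Omega>. (act t z, act g z) \<in> D"
    using act_omega_set_finite_netE[OF D(1)] by metis
  define G where "G n = (SOME g. g \<in> F \<and> (\<forall>z\<in>\<Omega>. (act (f ^ Suc n) z, act g z) \<in> D))" for n
  have "G n \<in> F \<and> (\<forall>z\<in>\<Omega>. (act (f ^ Suc n) z, act (G n) z) \<in> D)" for n
    unfolding G_def by (rule someI_ex) (use F(2) in blast)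
  then have G: "G n \<in> F" "\<And>z. z \<in> \<Omega> \<Longrightarrow> (act (f ^ Suc n) z, act (G n) z) \<in> D" for n
    by blast+
  have "\<not> inj_on G {..card F}"
  proof (rule pigeonhole)
    have "card (G ` {..card F}) \<le> card F"
      using G(1) F(1) by (intro card_mono) auto
    then show "card (G ` {..card F}) < card {..card F}"
      by simp
  qed
  then obtain i j where ij: "i < j" "G i = G j"
    unfolding inj_on_def by (metis linorder_neq_iff)
  have "(w, act (f ^ (j - i - 1) * f) w) \<in> E" if w: "w \<in> \<Omega>" for w
  proof -
    obtain z where z: "z \<in> \<Omega>" "w = act (f ^ Suc i) z"
      using w act_omega_set_surjective[OF assms(1), of "f ^ Suc i"] by blast
    have "f ^ (j - i - 1) * f * f ^ Suc i = f ^ (Suc (j - i - 1) + Suc i)"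
      by (simp only: power_Suc2[symmetric] power_add)
    also have "\<dots> = f ^ Suc j"
      using ij(1) by (intro arg_cong[where f = "power f"]) simp
    finally have "act (f ^ (j - i - 1) * f) w = act (f ^ Suc j) z"
      using z(2) by (metis act_mult)
    moreover have "(act (f ^ Suc i) z, act (f ^ Suc j) z) \<in> E"
      using D(2)[OF G(2)[OF z(1), of i]] UX_sym[OF D(1) G(2)[OF z(1), of j]] ij(2) by simp
    ultimately show ?thesis
      using z(2) by simp
  qed
  then show ?thesis
    using that by blast
qed

lemma ap_dynamic_omega_set:
  assumes "amenable TYPE('t)"
  shows "ap_dynamic act \<Omega>"
  unfolding ap_dynamic_def
proof
  fix \<alpha> :: "('x \<times> 'x) set" assume "\<alpha> \<in> UX"
  then obtain B where B: "B \<in> UX" "\<And>a b c. (a, b) \<in> B \<Longrightarrow> (b, c) \<in> B \<Longrightarrow> (a, c) \<in> \<alpha>"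
    using UX_transE by metis
  obtain \<delta> where \<delta>: "\<delta> \<in> UX" "\<And>z y t. z \<in> \<Omega> \<Longrightarrow> (z, y) \<in> \<delta> \<Longrightarrow> (act t z, act t y) \<in> B"
    using omega_uniformly_equicontinuousE[OF B(1)] by metis
  obtain F where F: "finite F" "\<And>t. \<exists>f\<in>F. \<forall>z\<in>\<Omega>. (act t z, act f z) \<in> \<delta>"
    using act_omega_set_finite_netE[OF \<delta>(1)] by metis
  have "\<forall>f. \<exists>k. \<forall>z\<in>\<Omega>. (z, act (k * f) z) \<in> B"
    using uniform_return_to_identityE[OF assms B(1)] by metis
  then obtain k where k: "\<And>f z. z \<in> \<Omega> \<Longrightarrow> (z, act (k f * f) z) \<in> B"
    by metis
  let ?A = "{a. \<forall>z\<in>\<Omega>. act a z \<in> ent_image \<alpha> {z}}"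
  have "(\<lambda>s. s * t) ` k ` F \<inter> ?A \<noteq> {}" for t
  proof -
    obtain f where f: "f \<in> F" "\<And>z. z \<in> \<Omega> \<Longrightarrow> (act t z, act f z) \<in> \<delta>"
      using F(2) by blast
    have "(z, act (k f * t) z) \<in> \<alpha>" if z: "z \<in> \<Omega>" for z
    proof -
      have "(z, act (k f) (act f z)) \<in> B"
        using k[OF z] by (simp add: act_mult)
      moreover have "(act (k f) (act f z), act (k f) (act t z)) \<in> B"
        using \<delta>(2)[OF act_omega_set[OF z] UX_sym[OF \<delta>(1) f(2)[OF z]]] .
      ultimately show ?thesis
        using B(2) by (simp add: act_mult)
    qed
    then have "k f * t \<in> ?A"
      by (simp add: ent_image_def)
    then show ?thesis
      using f(1) by blast
  qed
  then have "syndetic ?A"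
    unfolding syndetic_def using F(1) by (intro exI[of _ "k ` F"]) (simp add: finite_imp_compact)
  then show "\<exists>A. syndetic A \<and> (\<forall>z\<in>\<Omega>. \<forall>a\<in>A. act a z \<in> ent_image \<alpha> {z})"
    by blast
qed
end

theorem theorem4:
  fixes act :: "'t::topological_monoid_mult \<Rightarrow> 'x::{uniform_space, t2_space} \<Rightarrow> 'x"
    and x :: 'x
  assumes "semiflow act"
    and "\<forall>F :: 't set. finite F \<longrightarrow> (\<Inter>s\<in>F. range (\<lambda>t. t * s)) \<noteq> {}"
    and "compact (closure (orbit act x))"
    and "omega_set act x \<subseteq> Equi act"
  shows "minimal_set act (omega_set act x) \<and> omega_set act x \<subseteq> RE act \<and> x \<in> AAP act
         \<and> (amenable TYPE('t) \<longrightarrow> ap_dynamic act (omega_set act x))"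
proof -
  interpret equicontinuous_limit_set act x
    using assms by unfold_locales
  show ?thesis
    using minimal_omega_set omega_set_subset_RE x_in_AAP ap_dynamic_omega_set by blast
qed

end
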